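(* Let $(\mathscr{S},\mathscr{C},\mathscr{R},K)$ be a PL-RDK system containing an irreversible inflow reaction $0\to A$ (so $A\to 0\notin\mathscr{R}$). Let $\mathcal{D}$ be the set of all reactions other than $0\to A$ in which $A$ occurs in the reactant or the product complex. If for every $y\to y'\in\mathcal{D}$ the $A$-coordinate of the reaction vector $y'-y$ is zero, then the system does not have the capacity to admit multiple equilibria.
   Context: In a PL-RDK system each reaction $y\to y'$ has rate $k_{y\to y'}x^{T_{.y}}$ with $k_{y\to y'}>0$ and a real kinetic order vector $T_{.y}$ depending only on the reactant complex $y$; the dynamics is $dx/dt=\sum_{\mathscr{R}}k_{y\to y'}x^{T_{.y}}(y'-y)$. The stoichiometric subspace is $S=\mathrm{span}\{y'-y\}$. The system has the capacity to admit multiple equilibria if there exist positive rate constants for which there are two distinct positive equilibria $c^*,c^{**}$ with $c^*-c^{**}\in S$. Here $0$ denotes the zero complex and $A$ the complex consisting of one unit of species $A$. *)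

theory Defs
  imports "HOL-Analysis.Analysis"
begin

text \<open>A reaction is a pair
(reactant complex, product complex). The kinetic order matrix T assigns to each
reactant complex y a real vector T y (column T_{.y}); reactant-determinedness
is built in because T is indexed by the reactant complex only.\<close>

type_synonym 'a cplx = "'a \<Rightarrow> nat"

definition zero_cplx :: "'a cplx" where "zero_cplx = (\<lambda>_. 0)"

definition species_cplx :: "'a \<Rightarrow> 'a cplx" where
  "species_cplx A = (\<lambda>s. if s = A then 1 else 0)"

definition reaction_vector :: "'a cplx \<times> 'a cplx \<Rightarrow> real ^ ('a::finite)" where
  "reaction_vector r = (\<chi> s. real (snd r s) - real (fst r s))"

definition stoich_subspace :: "('a cplx \<times> 'a cplx) set \<Rightarrow> (real ^ ('a::finite)) set" where
  "stoich_subspace R = span (reaction_vector ` R)"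

definition reaction_network :: "('a cplx \<times> 'a cplx) set \<Rightarrow> bool" where
  "reaction_network R \<longleftrightarrow> finite R \<and> (\<forall>(y, y') \<in> R. y \<noteq> y')"

definition monomial :: "real ^ ('a::finite) \<Rightarrow> ('a \<Rightarrow> real) \<Rightarrow> real" where
  "monomial x t = (\<Prod>i\<in>UNIV. (x $ i) powr (t i))"

definition plrdk_rhs ::
  "('a cplx \<times> 'a cplx) set \<Rightarrow> ('a cplx \<Rightarrow> 'a \<Rightarrow> real) \<Rightarrow> ('a cplx \<times> 'a cplx \<Rightarrow> real)
     \<Rightarrow> real ^ ('a::finite) \<Rightarrow> real ^ 'a" where
  "plrdk_rhs R T k x = (\<Sum>r\<in>R. (k r * monomial x (T (fst r))) *\<^sub>R reaction_vector r)"

definition positive_vec :: "real ^ ('a::finite) \<Rightarrow> bool" where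
  "positive_vec x \<longleftrightarrow> (\<forall>i. x $ i > 0)"

definition positive_equilibrium ::
  "('a cplx \<times> 'a cplx) set \<Rightarrow> ('a cplx \<Rightarrow> 'a \<Rightarrow> real) \<Rightarrow> ('a cplx \<times> 'a cplx \<Rightarrow> real)
     \<Rightarrow> real ^ ('a::finite) \<Rightarrow> bool" where
  "positive_equilibrium R T k x \<longleftrightarrow> positive_vec x \<and> plrdk_rhs R T k x = 0"

definition capacity_multiple_equilibria ::
  "('a cplx \<times> 'a cplx) set \<Rightarrow> ('a cplx \<Rightarrow> 'a::finite \<Rightarrow> real) \<Rightarrow> bool" where
  "capacity_multiple_equilibria R T \<longleftrightarrow>
     (\<exists>k. (\<forall>r\<in>R. k r > 0) \<and>
        (\<exists>c1 c2. positive_equilibrium R T k c1 \<and> positive_equilibrium R T k c2 \<and>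
                 c1 \<noteq> c2 \<and> c1 - c2 \<in> stoich_subspace R))"

end

theory Submission
  imports Defs
begin

text \<open>The reactions of \<open>\<D>\<close> leave the concentration of \<open>A\<close> unchanged, and so does every
reaction not involving \<open>A\<close>. Hence the \<open>A\<close>-coordinate of the species formation rate is
the rate \<open>k x\<^sup>T\<close> of the inflow \<open>0 \<rightarrow> A\<close> alone, which is positive at every positive state:
the system has no positive equilibrium at all, let alone two.\<close>

lemma monomial_pos: "positive_vec x \<Longrightarrow> monomial x t > 0"
  unfolding monomial_def positive_vec_def
  by (intro prod_pos) (metis less_irrefl powr_gt_zero)

lemma reaction_vector_nth [simp]: "reaction_vector (y, y') $ s = real (y' s) - real (y s)"
  by (simp add: reaction_vector_def)

lemma plrdk_rhs_nth:
  "plrdk_rhs R T k x $ s = (\<Sum>r\<in>R. k r * monomial x (T (fst r)) * reaction_vector r $ s)"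
  unfolding plrdk_rhs_def by (simp add: sum_component)

lemma plrdk_rhs_nth_single_reaction:
  assumes "finite R" and "r\<^sub>0 \<in> R"
    and "\<forall>r\<in>R - {r\<^sub>0}. reaction_vector r $ s = 0"
  shows "plrdk_rhs R T k x $ s = k r\<^sub>0 * monomial x (T (fst r\<^sub>0)) * reaction_vector r\<^sub>0 $ s"
proof -
  have "plrdk_rhs R T k x $ s
      = (\<Sum>r\<in>insert r\<^sub>0 (R - {r\<^sub>0}). k r * monomial x (T (fst r)) * reaction_vector r $ s)"
    using assms(2) by (simp add: plrdk_rhs_nth insert_absorb)
  also have "\<dots> = k r\<^sub>0 * monomial x (T (fst r\<^sub>0)) * reaction_vector r\<^sub>0 $ s"
    using assms(1,3) by (simp add: sum.insert_remove)
  finally show ?thesis .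
qed

lemma no_positive_equilibrium_if_single_producer:
  assumes "finite R" and "r\<^sub>0 \<in> R" and "\<forall>r\<in>R. k r > 0"
    and "reaction_vector r\<^sub>0 $ s > 0"
    and "\<forall>r\<in>R - {r\<^sub>0}. reaction_vector r $ s = 0"
  shows "\<not> positive_equilibrium R T k x"
proof
  assume eq: "positive_equilibrium R T k x"
  then have "monomial x (T (fst r\<^sub>0)) > 0"
    by (simp add: positive_equilibrium_def monomial_pos)
  with assms have "plrdk_rhs R T k x $ s > 0"
    by (simp add: plrdk_rhs_nth_single_reaction)
  with eq show False
    by (simp add: positive_equilibrium_def)
qed

lemma not_capacity_multiple_equilibria_if_no_positive_equilibrium:
  assumes "\<And>k x. \<forall>r\<in>R. k r > 0 \<Longrightarrow> \<not> positive_equilibrium R T k x"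
  shows "\<not> capacity_multiple_equilibria R T"
  using assms unfolding capacity_multiple_equilibria_def by blast

theorem propositionE1:
  fixes R :: "(('a::finite) cplx \<times> 'a cplx) set"
    and T :: "'a cplx \<Rightarrow> 'a \<Rightarrow> real"
    and A :: 'a
  assumes "reaction_network R"
    and "(zero_cplx, species_cplx A) \<in> R"
    and "(species_cplx A, zero_cplx) \<notin> R"
    and "\<forall>(y, y') \<in> R. (y, y') \<noteq> (zero_cplx, species_cplx A) \<and> (y A \<noteq> 0 \<or> y' A \<noteq> 0)
            \<longrightarrow> reaction_vector (y, y') $ A = 0"
  shows "\<not> capacity_multiple_equilibria R T"
proof (rule not_capacity_multiple_equilibria_if_no_positive_equilibrium)
  fix k :: "'a cplx \<times> 'a cplx \<Rightarrow> real" and x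
  assume "\<forall>r\<in>R. k r > 0"
  moreover have "finite R"
    using assms(1) by (simp add: reaction_network_def)
  moreover have "reaction_vector (zero_cplx, species_cplx A) $ A > 0"
    by (simp add: zero_cplx_def species_cplx_def)
  moreover have "\<forall>r\<in>R - {(zero_cplx, species_cplx A)}. reaction_vector r $ A = 0"
    using assms(4) by fastforce
  ultimately show "\<not> positive_equilibrium R T k x"
    using assms(2) by (simp add: no_positive_equilibrium_if_single_producer)
qed

end
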